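(* If a simplicial complex $\mathcal{C}$ is nuclear, then its Alexander dual $\mathcal{C}^*$ is nuclear.
   Context: A simplicial complex on a finite ground set $V$ is a family of subsets of $V$ closed under subsets (the void complex $\{\}$ and $\{\emptyset\}$ allowed); facets are inclusion-maximal faces; complexes are considered up to isomorphism (bijection of ground sets carrying faces to faces). Alexander dual: $\mathcal{C}^*=\{S\subseteq V: V\setminus S\notin\mathcal{C}\}$ on $V$. $\Delta_k$ ($k\ge0$): complex on a $(k+1)$-set with that set as only facet; $\Delta_{-1}=\{\emptyset\}$, $\Delta_{-2}=\{\}$ on the empty set. $\sqcup$: disjoint union. $D_{m,n}=(\Delta_m\sqcup\Delta_n)^*$. $\operatorname{cone}^p(\mathcal{D})$: add $p$ new vertices $u_1,\dots,u_p$, facets $F\cup\{u_1,\dots,u_p\}$ ($\operatorname{cone}^0(\mathcal{D})=\mathcal{D}$). $G(\mathcal{D})$: $\mathcal{D}$ with one new ground-set element lying in no face. For $\mathcal{D}$ on $[n]$, $\Lambda(\mathcal{D})$ is the complex on $[n+1]$ with facets $[n]$ and $F\cup\{n+1\}$, $F$ a facet of $\mathcal{D}$. A complex is nuclear if it is (isomorphic to) one of: $\Lambda(\mathcal{D})$ with $\mathcal{D}$ nuclear; $G(\mathcal{D})$ with $\mathcal{D}$ nuclear; $\operatorname{cone}^p(\Delta_m\sqcup\Delta_n)$, $p,m,n\ge0$; $\operatorname{cone}^p(D_{m,n})$, $p\ge0$, $m,n\ge1$; $\Delta_k$, $k\ge-2$. *)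

theory Defs
  imports Main
begin

text \<open>Complexes are considered up to isomorphism; since they are finite, taking
  nat as ground type loses nothing.\<close>

definition is_complex :: "nat set \<Rightarrow> nat set set \<Rightarrow> bool" where
  "is_complex V C \<longleftrightarrow> finite V \<and> (\<forall>F\<in>C. F \<subseteq> V) \<and> (\<forall>F\<in>C. \<forall>G. G \<subseteq> F \<longrightarrow> G \<in> C)"

definition facets :: "nat set set \<Rightarrow> nat set set" where
  "facets C = {F \<in> C. \<forall>G\<in>C. F \<subseteq> G \<longrightarrow> G = F}"

definition gen_complex :: "nat set set \<Rightarrow> nat set set" where
  "gen_complex Fs = {G. \<exists>F\<in>Fs. G \<subseteq> F}"

definition alex_dual :: "nat set \<Rightarrow> nat set set \<Rightarrow> nat set set" where
  "alex_dual V C = {S. S \<subseteq> V \<and> V - S \<notin> C}"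

definition complex_iso :: "nat set \<Rightarrow> nat set set \<Rightarrow> nat set \<Rightarrow> nat set set \<Rightarrow> bool" where
  "complex_iso V C W D \<longleftrightarrow> (\<exists>f. bij_betw f V W \<and> D = (\<lambda>F. f ` F) ` C)"

text \<open>cone^p: add the (disjoint, p-element) vertex set U; facets F \<union> U.\<close>
definition cone_on :: "nat set set \<Rightarrow> nat set \<Rightarrow> nat set set" where
  "cone_on C U = gen_complex {F \<union> U | F. F \<in> facets C}"

definition Lambda_on :: "nat set \<Rightarrow> nat set set \<Rightarrow> nat \<Rightarrow> nat set set" where
  "Lambda_on V C v = gen_complex (insert V {insert v F | F. F \<in> facets C})"

text \<open>\<Delta>_m \<squnion> \<Delta>_n realised on {0..m+n+1}.\<close>
definition disj_simplices_ground :: "nat \<Rightarrow> nat \<Rightarrow> nat set" where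
  "disj_simplices_ground m n = {0..m+n+1}"

definition disj_simplices :: "nat \<Rightarrow> nat \<Rightarrow> nat set set" where
  "disj_simplices m n = Pow {0..m} \<union> Pow {m+1..m+n+1}"

definition D_complex :: "nat \<Rightarrow> nat \<Rightarrow> nat set set" where
  "D_complex m n = alex_dual (disj_simplices_ground m n) (disj_simplices m n)"

definition cone_vertices :: "nat \<Rightarrow> nat \<Rightarrow> nat \<Rightarrow> nat set" where
  "cone_vertices m n p = {m+n+2..<m+n+2+p}"

inductive nuclear :: "nat set \<Rightarrow> nat set set \<Rightarrow> bool" where
  iso: "nuclear V C \<Longrightarrow> complex_iso V C W D \<Longrightarrow> nuclear W D"
| Lambda: "nuclear V C \<Longrightarrow> v \<notin> V \<Longrightarrow> nuclear (insert v V) (Lambda_on V C v)"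
| G: "nuclear V C \<Longrightarrow> v \<notin> V \<Longrightarrow> nuclear (insert v V) C"
| cone_disj: "nuclear (disj_simplices_ground m n \<union> cone_vertices m n p)
      (cone_on (disj_simplices m n) (cone_vertices m n p))"
| cone_D: "m \<ge> 1 \<Longrightarrow> n \<ge> 1 \<Longrightarrow> nuclear (disj_simplices_ground m n \<union> cone_vertices m n p)
      (cone_on (D_complex m n) (cone_vertices m n p))"
| simplex: "nuclear {0..k} (Pow {0..k})"
| empty_simplex: "nuclear {} {{}}"
| void: "nuclear {} {}"

end

theory Submission
  imports Defs
begin

text \<open>Alexander duality commutes with the operations generating nuclear complexes:
  \<open>\<Lambda>(D)\<^sup>* = G(D\<^sup>*)\<close> and \<open>G(D)\<^sup>* = \<Lambda>(D\<^sup>*)\<close>, \<open>cone\<^sup>p(D)\<^sup>* = cone\<^sup>p(D\<^sup>*)\<close>, and it permutes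
  the simplices, \<open>{\<emptyset>}\<close> and the void complex (up to ghost vertices). As duality is an
  involution, \<open>cone\<^sup>p(\<Delta>\<^sub>m \<squnion> \<Delta>\<^sub>n)\<close> and \<open>cone\<^sup>p(D\<^sub>m\<^sub>,\<^sub>n)\<close> are exchanged. The one dual
  falling outside the generating list is \<open>cone\<^sup>p(D\<^sub>0\<^sub>,\<^sub>n)\<close>: it is \<open>G\<close> of a cone over the
  boundary of a simplex, and such a complex is obtained from a simplex by repeated \<open>\<Lambda>\<close>.\<close>

lemma ex_facet_superset:
  assumes "finite V" "X \<subseteq> Pow V" "T \<in> X"
  shows "\<exists>F\<in>facets X. T \<subseteq> F"
proof -
  have "finite X" using assms(1,2) finite_subset by blast
  from finite_has_maximal2[OF this assms(3)] show ?thesis unfolding facets_def by auto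
qed

lemma gen_complex_facets:
  assumes "is_complex V X" shows "gen_complex (facets X) = X"
proof (intro set_eqI iffI)
  fix S assume "S \<in> gen_complex (facets X)"
  then obtain F where "F \<in> facets X" "S \<subseteq> F" unfolding gen_complex_def by blast
  then show "S \<in> X" using assms unfolding is_complex_def facets_def by blast
next
  fix S assume "S \<in> X"
  then show "S \<in> gen_complex (facets X)"
    using ex_facet_superset[of V X S] assms unfolding is_complex_def gen_complex_def by blast
qed

lemma cone_on_char:
  assumes "is_complex V X"
  shows "cone_on X U = {S. S \<subseteq> V \<union> U \<and> S - U \<in> X}"
proof -
  have "cone_on X U = {S. S - U \<in> gen_complex (facets X)}"
    unfolding cone_on_def gen_complex_def by auto
  also have "\<dots> = {S. S - U \<in> X}" unfolding gen_complex_facets[OF assms] ..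
  also have "\<dots> = {S. S \<subseteq> V \<union> U \<and> S - U \<in> X}"
    using assms unfolding is_complex_def by auto
  finally show ?thesis .
qed

lemma Lambda_on_eq_Pow_Un_cone_on: "Lambda_on V X v = Pow V \<union> cone_on X {v}"
  unfolding Lambda_on_def cone_on_def gen_complex_def by blast

lemma Lambda_on_char:
  assumes "is_complex V X" "v \<notin> V"
  shows "Lambda_on V X v = {S. S \<subseteq> insert v V \<and> (v \<notin> S \<or> S - {v} \<in> X)}"
  using assms unfolding Lambda_on_eq_Pow_Un_cone_on cone_on_char[OF assms(1)] is_complex_def
  by blast

lemma is_complex_cone_on:
  assumes "is_complex V X" "finite U"
  shows "is_complex (V \<union> U) (cone_on X U)"
  using assms unfolding cone_on_char[OF assms(1)] is_complex_def
  by auto (meson Diff_mono order_refl)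

lemma is_complex_Lambda_on:
  assumes "is_complex V X" "v \<notin> V"
  shows "is_complex (insert v V) (Lambda_on V X v)"
  using assms unfolding Lambda_on_char[OF assms] is_complex_def by (auto intro: Diff_mono)

lemma is_complex_alex_dual:
  assumes "is_complex V X" shows "is_complex V (alex_dual V X)"
  using assms unfolding is_complex_def alex_dual_def
  by auto (meson Diff_mono order_refl)

lemma alex_dual_alex_dual:
  assumes "is_complex V X" shows "alex_dual V (alex_dual V X) = X"
  using assms unfolding is_complex_def alex_dual_def by (auto simp: double_diff)

lemma alex_dual_Lambda_on:
  assumes "is_complex V X" "v \<notin> V"
  shows "alex_dual (insert v V) (Lambda_on V X v) = alex_dual V X"
  using assms unfolding alex_dual_def Lambda_on_char[OF assms] is_complex_def
  by (auto simp: insert_Diff_if)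

lemma alex_dual_insert:
  assumes "is_complex V X" "v \<notin> V"
  shows "alex_dual (insert v V) X = Lambda_on V (alex_dual V X) v"
proof -
  have "V - (S - {v}) = V - S" for S using assms(2) by blast
  then show ?thesis
    using assms unfolding Lambda_on_char[OF is_complex_alex_dual[OF assms(1)] assms(2)]
    unfolding alex_dual_def is_complex_def by (auto simp: insert_Diff_if)
qed

lemma alex_dual_cone_on:
  assumes "is_complex V X" "V \<inter> U = {}"
  shows "alex_dual (V \<union> U) (cone_on X U) = cone_on (alex_dual V X) U"
proof -
  have "(V \<union> U - S) - U = V - (S - U)" for S using assms(2) by blast
  then show ?thesis
    unfolding cone_on_char[OF assms(1)] cone_on_char[OF is_complex_alex_dual[OF assms(1)]]
    unfolding alex_dual_def by auto
qed

lemma is_complex_iso: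
  assumes "is_complex V C" "complex_iso V C W D"
  shows "is_complex W D"
proof -
  obtain f where f: "bij_betw f V W" and D: "D = image f ` C"
    using assms(2) unfolding complex_iso_def by blast
  have "finite W" using f assms(1) bij_betw_finite unfolding is_complex_def by blast
  moreover have "F \<subseteq> W" if "F \<in> D" for F
    using that f assms(1) unfolding D is_complex_def bij_betw_def by blast
  moreover have "G \<in> D" if FD: "F \<in> D" and GF: "G \<subseteq> F" for F G
  proof -
    obtain F0 where F0: "F0 \<in> C" "F = f ` F0" using FD unfolding D by blast
    then obtain H where "H \<subseteq> F0" "G = f ` H" using GF subset_image_iff by metis
    then show ?thesis using assms(1) F0(1) unfolding D is_complex_def by blast
  qed
  ultimately show ?thesis unfolding is_complex_def by blast
qed

lemma complex_iso_alex_dual: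
  assumes "is_complex V C" "complex_iso V C W D"
  shows "complex_iso V (alex_dual V C) W (alex_dual W D)"
proof -
  obtain f where f: "bij_betw f V W" and D: "D = image f ` C"
    using assms(2) unfolding complex_iso_def by blast
  have inj: "inj_on (image f) (Pow V)" and Pow: "image f ` Pow V = Pow W"
    using bij_betw_Pow[OF f] by (auto simp: bij_betw_def)
  have compl: "f ` (V - S) = W - f ` S" if "S \<subseteq> V" for S
    using inj_on_image_set_diff[OF bij_betw_imp_inj_on[OF f], of V S] that f
    by (simp add: bij_betw_def)
  have mem: "f ` F \<in> D \<longleftrightarrow> F \<in> C" if "F \<subseteq> V" for F
    using inj_on_image_mem_iff[OF inj, of F C] that assms(1) unfolding D is_complex_def by auto
  have dual_mem: "W - f ` S \<notin> D \<longleftrightarrow> S \<in> alex_dual V C" if "S \<subseteq> V" for S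
    using compl[OF that] mem[of "V - S"] that unfolding alex_dual_def by auto
  have "alex_dual W D = {T \<in> image f ` Pow V. W - T \<notin> D}"
    unfolding alex_dual_def Pow by auto
  also have "\<dots> = image f ` {S \<in> Pow V. W - f ` S \<notin> D}"
    by blast
  also have "{S \<in> Pow V. W - f ` S \<notin> D} = alex_dual V C"
    using dual_mem unfolding alex_dual_def by auto
  finally show ?thesis unfolding complex_iso_def using f by (intro exI[of _ f]) simp
qed

lemma is_complex_disj_simplices: "is_complex (disj_simplices_ground m n) (disj_simplices m n)"
  unfolding is_complex_def disj_simplices_ground_def disj_simplices_def by auto

lemma is_complex_D_complex: "is_complex (disj_simplices_ground m n) (D_complex m n)"
  unfolding D_complex_def by (rule is_complex_alex_dual[OF is_complex_disj_simplices])

lemma finite_cone_vertices: "finite (cone_vertices m n p)"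
  unfolding cone_vertices_def by simp

lemma disj_simplices_ground_Int_cone_vertices: "disj_simplices_ground m n \<inter> cone_vertices m n p = {}"
  unfolding disj_simplices_ground_def cone_vertices_def by auto

lemma nuclear_is_complex: "nuclear V C \<Longrightarrow> is_complex V C"
proof (induction rule: nuclear.induct)
  case (iso V C W D) then show ?case using is_complex_iso by blast
next
  case (Lambda V C v) then show ?case using is_complex_Lambda_on by blast
next
  case (G V C v) then show ?case unfolding is_complex_def by auto
next
  case (cone_disj m n p)
  show ?case using is_complex_cone_on[OF is_complex_disj_simplices finite_cone_vertices] .
next
  case (cone_D m n p)
  show ?case using is_complex_cone_on[OF is_complex_D_complex finite_cone_vertices] .
qed (auto simp: is_complex_def)

lemma nuclear_void: "finite V \<Longrightarrow> nuclear V {}"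
proof (induction V rule: finite_induct)
  case empty show ?case by (rule nuclear.void)
next
  case (insert v V) then show ?case using nuclear.G by blast
qed

lemma nuclear_Pow:
  assumes "finite V" shows "nuclear V (Pow V)"
proof (cases "V = {}")
  case True then show ?thesis using nuclear.empty_simplex by simp
next
  case False
  then obtain k where "card V = Suc k" using assms by (metis card_0_eq not0_implies_Suc)
  then obtain h where h: "bij_betw h {0..k} V"
    using finite_same_card_bij[of "{0..k}" V] assms by auto
  then have "complex_iso {0..k} (Pow {0..k}) V (Pow V)"
    unfolding complex_iso_def by (auto simp: bij_betw_def image_Pow_surj)
  then show ?thesis by (rule nuclear.iso[OF nuclear.simplex])
qed

text \<open>The complex below is the join of the boundary of the simplex \<open>W\<close> with the simplex \<open>U\<close>.\<close>

lemma nuclear_cone_simplex_boundary: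
  assumes "finite W" "W \<noteq> {}" "finite U" "W \<inter> U = {}"
  shows "nuclear (W \<union> U) {S. S \<subseteq> W \<union> U \<and> \<not> W \<subseteq> S}"
  using assms
proof (induction W rule: finite_ne_induct)
  case (singleton w)
  then have "{S. S \<subseteq> {w} \<union> U \<and> \<not> {w} \<subseteq> S} = Pow U" by blast
  moreover have "nuclear (insert w U) (Pow U)"
    using nuclear.G[OF nuclear_Pow] singleton by blast
  ultimately show ?case by simp
next
  case (insert w W)
  let ?K = "{S. S \<subseteq> W \<union> U \<and> \<not> W \<subseteq> S}"
  have IH: "nuclear (W \<union> U) ?K" and w: "w \<notin> W \<union> U" using insert by auto
  have "Lambda_on (W \<union> U) ?K w = {S. S \<subseteq> insert w W \<union> U \<and> \<not> insert w W \<subseteq> S}"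
    unfolding Lambda_on_char[OF nuclear_is_complex[OF IH] w] using w by blast
  then show ?case using nuclear.Lambda[OF IH w] by simp
qed

lemma nuclear_cone_alex_dual_point_Un_simplex:
  assumes "a \<notin> B \<union> U" "B \<inter> U = {}" "finite B" "B \<noteq> {}" "finite U"
  shows "nuclear (insert a B \<union> U) (cone_on (alex_dual (insert a B) (Pow {a} \<union> Pow B)) U)"
proof -
  have cx: "is_complex (insert a B) (alex_dual (insert a B) (Pow {a} \<union> Pow B))"
    by (rule is_complex_alex_dual) (use assms(3) in \<open>auto simp: is_complex_def\<close>)
  have "S \<in> cone_on (alex_dual (insert a B) (Pow {a} \<union> Pow B)) U
      \<longleftrightarrow> S \<subseteq> B \<union> U \<and> \<not> B \<subseteq> S" for S
  proof -
    have "S - U \<in> alex_dual (insert a B) (Pow {a} \<union> Pow B)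
        \<longleftrightarrow> S - U \<subseteq> insert a B \<and> \<not> B \<subseteq> S - U \<and> a \<notin> S - U"
      unfolding alex_dual_def using assms(1) by auto
    moreover have "B \<subseteq> S - U \<longleftrightarrow> B \<subseteq> S" using assms(2) by auto
    ultimately show ?thesis unfolding cone_on_char[OF cx] using assms(1) by auto
  qed
  then have "cone_on (alex_dual (insert a B) (Pow {a} \<union> Pow B)) U
      = {S. S \<subseteq> B \<union> U \<and> \<not> B \<subseteq> S}" by blast
  moreover have "nuclear (insert a (B \<union> U)) {S. S \<subseteq> B \<union> U \<and> \<not> B \<subseteq> S}"
    by (rule nuclear.G[OF nuclear_cone_simplex_boundary]) (use assms in auto)
  ultimately show ?thesis by simp
qed

lemma nuclear_cone_D_complex_degenerate:
  assumes "m = 0 \<or> n = 0"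
  shows "nuclear (disj_simplices_ground m n \<union> cone_vertices m n p)
    (cone_on (D_complex m n) (cone_vertices m n p))"
proof -
  let ?U = "cone_vertices m n p"
  have U: "finite ?U" "{0..m+n+1} \<inter> ?U = {}"
    using finite_cone_vertices disj_simplices_ground_Int_cone_vertices
    unfolding disj_simplices_ground_def by auto
  consider "m = 0" | "n = 0" using assms by blast
  then show ?thesis
  proof cases
    case 1
    have "nuclear (insert 0 {1..n+1} \<union> ?U)
        (cone_on (alex_dual (insert 0 {1..n+1}) (Pow {0} \<union> Pow {1..n+1})) ?U)"
      by (rule nuclear_cone_alex_dual_point_Un_simplex) (use U 1 in auto)
    moreover have "disj_simplices_ground m n = insert 0 {1..n+1}"
      using 1 by (auto simp: disj_simplices_ground_def)
    moreover have "D_complex m n = alex_dual (insert 0 {1..n+1}) (Pow {0} \<union> Pow {1..n+1})"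
      using 1 calculation(2) by (simp add: D_complex_def disj_simplices_def)
    ultimately show ?thesis by simp
  next
    case 2
    have "nuclear (insert (m+1) {0..m} \<union> ?U)
        (cone_on (alex_dual (insert (m+1) {0..m}) (Pow {m+1} \<union> Pow {0..m})) ?U)"
      by (rule nuclear_cone_alex_dual_point_Un_simplex) (use U 2 in \<open>auto simp: disjoint_iff\<close>)
    moreover have "disj_simplices_ground m n = insert (m+1) {0..m}"
      using 2 by (auto simp: disj_simplices_ground_def)
    moreover have "D_complex m n = alex_dual (insert (m+1) {0..m}) (Pow {m+1} \<union> Pow {0..m})"
      using 2 calculation(2) by (simp add: D_complex_def disj_simplices_def Un_commute)
    ultimately show ?thesis by simp
  qed
qed

lemma nuclear_alex_dual: "nuclear V C \<Longrightarrow> nuclear V (alex_dual V C)"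
proof (induction rule: nuclear.induct)
  case (iso V C W D)
  then show ?case using nuclear.iso complex_iso_alex_dual nuclear_is_complex by blast
next
  case (Lambda V C v)
  show ?case
    unfolding alex_dual_Lambda_on[OF nuclear_is_complex[OF Lambda.hyps(1)] Lambda.hyps(2)]
    using Lambda.IH Lambda.hyps(2) by (rule nuclear.G)
next
  case (G V C v)
  show ?case
    unfolding alex_dual_insert[OF nuclear_is_complex[OF G.hyps(1)] G.hyps(2)]
    using G.IH G.hyps(2) by (rule nuclear.Lambda)
next
  case (cone_disj m n p)
  have "alex_dual (disj_simplices_ground m n \<union> cone_vertices m n p)
      (cone_on (disj_simplices m n) (cone_vertices m n p)) = cone_on (D_complex m n) (cone_vertices m n p)"
    unfolding D_complex_def
    by (rule alex_dual_cone_on[OF is_complex_disj_simplices disj_simplices_ground_Int_cone_vertices])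
  moreover have "nuclear (disj_simplices_ground m n \<union> cone_vertices m n p)
      (cone_on (D_complex m n) (cone_vertices m n p))"
    using nuclear.cone_D nuclear_cone_D_complex_degenerate by (cases "m = 0 \<or> n = 0") auto
  ultimately show ?case by simp
next
  case (cone_D m n p)
  have "alex_dual (disj_simplices_ground m n \<union> cone_vertices m n p)
      (cone_on (D_complex m n) (cone_vertices m n p)) = cone_on (disj_simplices m n) (cone_vertices m n p)"
    unfolding alex_dual_cone_on[OF is_complex_D_complex disj_simplices_ground_Int_cone_vertices]
    unfolding D_complex_def alex_dual_alex_dual[OF is_complex_disj_simplices] ..
  then show ?case using nuclear.cone_disj by simp
next
  case (simplex k)
  have "alex_dual {0..k} (Pow {0..k}) = {}" unfolding alex_dual_def by auto
  then show ?case using nuclear_void[of "{0..k}"] by simp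
next
  case empty_simplex
  have "alex_dual {} {{}} = {}" unfolding alex_dual_def by auto
  then show ?case using nuclear.void by simp
next
  case void
  have "alex_dual {} {} = {{}}" unfolding alex_dual_def by auto
  then show ?case using nuclear.empty_simplex by simp
qed

text \<open>The hypothesis \<open>is_complex V C\<close> is implied by \<open>nuclear V C\<close> (\<open>nuclear_is_complex\<close>).\<close>

theorem proposition6p2:
  assumes "is_complex V C"
    and "nuclear V C"
  shows "nuclear V (alex_dual V C)"
  using nuclear_alex_dual[OF assms(2)] .

end
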